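(* In the setting below, any two correct non-sink members are intertwined: for all correct $i',j'\in\Pi\setminus V_{\mathit{sink}}$, every quorum $Q$ of $i'$ and every quorum $Q'$ of $j'$ satisfy $|Q\cap Q'|>f$.
   Context: Processes and faults: $\Pi$ is a finite set of processes, $f\ge0$ a known integer; $W\subseteq\Pi$ is the set of correct processes and $F=\Pi\setminus W$ the Byzantine faulty processes, $|F|\le f$. Faulty processes may declare arbitrary slices. Slices and quorums: each process $i$ has a set $\mathcal{S}_i$ of slices (subsets of $\Pi$). $Q\subseteq\Pi$ is a quorum if every $i\in Q$ has some $S\in\mathcal{S}_i$ with $S\subseteq Q$; a quorum of $i$ is a quorum containing $i$. Two correct processes $i,j$ are intertwined if $|Q\cap Q'|>f$ for every quorum $Q$ of $i$ and every quorum $Q'$ of $j$. Knowledge graph: each process $i$ is given $\mathit{PD}_i\subseteq\Pi$; $G_{\mathit{di}}$ is the directed graph on $\Pi$ with edge $(i,j)$ iff $j\in\mathit{PD}_i$. A sink component is a strongly connected component of $G_{\mathit{di}}$ from which no path leads outside it. A directed graph is $k$-OSR if (1) its underlying undirected graph is connected; (2) its condensation into strongly connected components has exactly one sink $G_{\mathit{sink}}$; (3) $G_{\mathit{sink}}$ is $k$-strongly connected (every ordered pair of its nodes joined by $k$ node-disjoint directed paths); (4) from every node outside $G_{\mathit{sink}}$ to every node in it there are at least $k$ node-disjoint directed paths. Standing assumption: $G_{\mathit{di}}$ has a unique sink component with vertex set $V_{\mathit{sink}}$, which contains at least $2f+1$ correct processes, and the graph obtained from $G_{\mathit{di}}$ by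 deleting $F$ is $(f+1)$-OSR. Slice construction: let $m=\lceil (|V_{\mathit{sink}}|+f+1)/2\rceil$. Every correct $i\in V_{\mathit{sink}}$ has $\mathcal{S}_i=\{S\subseteq V_{\mathit{sink}}: |S|=m\}$. Every correct $i\notin V_{\mathit{sink}}$ is given a set $V_i\subseteq V_{\mathit{sink}}$ containing at least $f+1$ correct members of $V_{\mathit{sink}}$, and has $\mathcal{S}_i=\{S\subseteq V_i: |S|=f+1\}$. *)

theory Defs
  imports Main
begin

definition is_quorum :: "'p set \<Rightarrow> ('p \<Rightarrow> 'p set set) \<Rightarrow> 'p set \<Rightarrow> bool" where
  "is_quorum Pi Sl Q \<longleftrightarrow> Q \<subseteq> Pi \<and> (\<forall>i\<in>Q. \<exists>S\<in>Sl i. S \<subseteq> Q)"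

definition quorum_of :: "'p set \<Rightarrow> ('p \<Rightarrow> 'p set set) \<Rightarrow> 'p \<Rightarrow> 'p set \<Rightarrow> bool" where
  "quorum_of Pi Sl i Q \<longleftrightarrow> is_quorum Pi Sl Q \<and> i \<in> Q"

definition intertwined :: "'p set \<Rightarrow> nat \<Rightarrow> ('p \<Rightarrow> 'p set set) \<Rightarrow> 'p \<Rightarrow> 'p \<Rightarrow> bool" where
  "intertwined Pi f Sl i j \<longleftrightarrow>
     (\<forall>Q Q'. quorum_of Pi Sl i Q \<longrightarrow> quorum_of Pi Sl j Q' \<longrightarrow> card (Q \<inter> Q') > f)"

definition kg_edges :: "'p set \<Rightarrow> ('p \<Rightarrow> 'p set) \<Rightarrow> ('p \<times> 'p) set" where
  "kg_edges Pi PD = {(i, j). i \<in> Pi \<and> j \<in> PD i}"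

definition reach :: "'p set \<Rightarrow> ('p \<times> 'p) set \<Rightarrow> 'p \<Rightarrow> 'p \<Rightarrow> bool" where
  "reach V E x y \<longleftrightarrow> (x, y) \<in> (E \<inter> (V \<times> V))\<^sup>*"

definition is_scc :: "'p set \<Rightarrow> ('p \<times> 'p) set \<Rightarrow> 'p set \<Rightarrow> bool" where
  "is_scc V E C \<longleftrightarrow> C \<noteq> {} \<and> C \<subseteq> V \<and>
     (\<forall>x\<in>C. \<forall>y\<in>V. (reach V E x y \<and> reach V E y x) \<longleftrightarrow> y \<in> C)"

definition is_sink_comp :: "'p set \<Rightarrow> ('p \<times> 'p) set \<Rightarrow> 'p set \<Rightarrow> bool" where
  "is_sink_comp V E C \<longleftrightarrow> is_scc V E C \<and> (\<forall>x\<in>C. \<forall>y\<in>V. reach V E x y \<longrightarrow> y \<in> C)"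

definition dpath :: "'p set \<Rightarrow> ('p \<times> 'p) set \<Rightarrow> 'p list \<Rightarrow> bool" where
  "dpath V E xs \<longleftrightarrow> xs \<noteq> [] \<and> set xs \<subseteq> V \<and> distinct xs \<and>
     (\<forall>i. Suc i < length xs \<longrightarrow> (xs ! i, xs ! Suc i) \<in> E)"

definition k_disjoint_paths :: "'p set \<Rightarrow> ('p \<times> 'p) set \<Rightarrow> nat \<Rightarrow> 'p \<Rightarrow> 'p \<Rightarrow> bool" where
  "k_disjoint_paths V E k x y \<longleftrightarrow>
     (\<exists>P :: nat \<Rightarrow> 'p list.
        (\<forall>i<k. dpath V E (P i) \<and> hd (P i) = x \<and> last (P i) = y) \<and>
        (\<forall>i<k. \<forall>j<k. i \<noteq> j \<longrightarrow> P i \<noteq> P j \<and> set (P i) \<inter> set (P j) \<subseteq> {x, y}))"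

definition k_strongly_connected :: "'p set \<Rightarrow> ('p \<times> 'p) set \<Rightarrow> nat \<Rightarrow> bool" where
  "k_strongly_connected V E k \<longleftrightarrow>
     (\<forall>x\<in>V. \<forall>y\<in>V. x \<noteq> y \<longrightarrow> k_disjoint_paths V (E \<inter> (V \<times> V)) k x y)"

definition k_OSR :: "'p set \<Rightarrow> ('p \<times> 'p) set \<Rightarrow> nat \<Rightarrow> bool" where
  "k_OSR V E k \<longleftrightarrow>
     (\<forall>x\<in>V. \<forall>y\<in>V. (x, y) \<in> ((E \<union> E\<inverse>) \<inter> (V \<times> V))\<^sup>*) \<and>
     (\<exists>Cs. is_sink_comp V E Cs \<and> (\<forall>C. is_sink_comp V E C \<longrightarrow> C = Cs) \<and>
        k_strongly_connected Cs E k \<and>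
        (\<forall>x\<in>V - Cs. \<forall>y\<in>Cs. k_disjoint_paths V (E \<inter> (V \<times> V)) k x y))"

end

theory Submission
  imports Defs
begin

text \<open>A slice of \<open>f + 1\<close> processes contains a correct process, and all slices of a non-sink
  process lie in the sink; so every quorum of a correct non-sink process contains a full slice of
  a correct sink process, i.e. more than \<open>(|Vsink| + f) / 2\<close> members of the sink. Two such sets
  overlap in more than \<open>f\<close> processes.\<close>

lemma card_Int_gt_if_card_sum_gt:
  assumes "finite V" and "A \<subseteq> V" and "B \<subseteq> V" and "card V + f < card A + card B"
  shows "f < card (A \<inter> B)"
proof -
  have "finite A" and "finite B" using assms(1-3) finite_subset by auto
  then have "card A + card B = card (A \<union> B) + card (A \<inter> B)" by (rule card_Un_Int)
  moreover have "card (A \<union> B) \<le> card V" using assms(1-3) by (simp add: card_mono)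
  ultimately show ?thesis using assms(4) by linarith
qed

lemma Int_nonempty_if_card_gt_card_diff:
  assumes "finite Pi" and "S \<subseteq> Pi" and "card (Pi - W) < card S"
  shows "S \<inter> W \<noteq> {}"
proof
  assume "S \<inter> W = {}"
  with assms(2) have "S \<subseteq> Pi - W" by blast
  with assms(1) have "card S \<le> card (Pi - W)" by (simp add: card_mono)
  with assms(3) show False by simp
qed

lemma quorum_contains_slice:
  assumes "is_quorum Pi Sl Q" and "i \<in> Q"
  obtains S where "S \<in> Sl i" and "S \<subseteq> Q"
  using assms unfolding is_quorum_def by blast

lemma quorum_contains_correct_slice:
  assumes "finite Pi" and "card (Pi - W) \<le> f" and "quorum_of Pi Sl k Q"
    and "\<forall>S\<in>Sl k. S \<subseteq> V \<and> card S = f + 1"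
  obtains j T where "j \<in> W \<inter> V" and "T \<in> Sl j" and "T \<subseteq> Q"
proof -
  have Q: "is_quorum Pi Sl Q" "k \<in> Q" and "Q \<subseteq> Pi"
    using assms(3) unfolding quorum_of_def is_quorum_def by auto
  obtain S where S: "S \<in> Sl k" "S \<subseteq> Q" using quorum_contains_slice[OF Q] .
  have "S \<inter> W \<noteq> {}"
    using assms(1,2,4) S \<open>Q \<subseteq> Pi\<close>
    by (intro Int_nonempty_if_card_gt_card_diff[of Pi]) auto
  then obtain j where "j \<in> S" "j \<in> W" by blast
  moreover from this have "j \<in> V" using assms(4) S by blast
  moreover obtain T where "T \<in> Sl j" "T \<subseteq> Q"
    using quorum_contains_slice[OF Q(1)] \<open>j \<in> S\<close> S(2) by blast
  ultimately show ?thesis using that by blast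
qed

theorem lemma5:
  fixes Pi W Vsink :: "'p set" and f :: nat
    and Sl :: "'p \<Rightarrow> 'p set set" and PD :: "'p \<Rightarrow> 'p set" and Vi :: "'p \<Rightarrow> 'p set"
  assumes fin: "finite Pi"
    and W_sub: "W \<subseteq> Pi"
    and faulty_bound: "card (Pi - W) \<le> f"
    and PD_sub: "\<forall>i\<in>Pi. PD i \<subseteq> Pi"
    and sink: "is_sink_comp Pi (kg_edges Pi PD) Vsink"
    and sink_unique: "\<forall>C. is_sink_comp Pi (kg_edges Pi PD) C \<longrightarrow> C = Vsink"
    and sink_correct: "card (Vsink \<inter> W) \<ge> 2 * f + 1"
    and osr: "k_OSR W (kg_edges Pi PD \<inter> (W \<times> W)) (f + 1)"
    and slices_sink: "\<forall>i\<in>W \<inter> Vsink.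
        Sl i = {S. S \<subseteq> Vsink \<and> card S = (card Vsink + f + 2) div 2}"
    and slices_nonsink: "\<forall>i\<in>W - Vsink.
        Vi i \<subseteq> Vsink \<and> card (Vi i \<inter> W) \<ge> f + 1 \<and>
        Sl i = {S. S \<subseteq> Vi i \<and> card S = f + 1}"
  shows "\<forall>i'\<in>W - Vsink. \<forall>j'\<in>W - Vsink. intertwined Pi f Sl i' j'"
proof (intro ballI)
  fix i' j' assume i': "i' \<in> W - Vsink" and j': "j' \<in> W - Vsink"
  have "finite Vsink"
    using sink fin finite_subset unfolding is_sink_comp_def is_scc_def by blast
  have sink_slice: "T \<subseteq> Vsink \<and> card Vsink + f < 2 * card T"
    if "j \<in> W \<inter> Vsink" "T \<in> Sl j" for j T
    using that slices_sink by auto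
  have nonsink_slices: "\<forall>S\<in>Sl k. S \<subseteq> Vsink \<and> card S = f + 1" if "k \<in> W - Vsink" for k
    using that slices_nonsink by auto
  show "intertwined Pi f Sl i' j'"
    unfolding intertwined_def
  proof (intro allI impI)
    fix Q Q' assume q: "quorum_of Pi Sl i' Q" and q': "quorum_of Pi Sl j' Q'"
    obtain j T where T: "j \<in> W \<inter> Vsink" "T \<in> Sl j" "T \<subseteq> Q"
      using quorum_contains_correct_slice[OF fin faulty_bound q nonsink_slices[OF i']] .
    obtain j2 T' where T': "j2 \<in> W \<inter> Vsink" "T' \<in> Sl j2" "T' \<subseteq> Q'"
      using quorum_contains_correct_slice[OF fin faulty_bound q' nonsink_slices[OF j']] .
    have "f < card (T \<inter> T')"
      using \<open>finite Vsink\<close> sink_slice[OF T(1,2)] sink_slice[OF T'(1,2)]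
      by (intro card_Int_gt_if_card_sum_gt[of Vsink]) auto
    also have "\<dots> \<le> card (Q \<inter> Q')"
      using q fin T(3) T'(3) unfolding quorum_of_def is_quorum_def
      by (intro card_mono) (auto intro: finite_subset)
    finally show "f < card (Q \<inter> Q')" .
  qed
qed

end
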